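(* Let $p, \sigma \in \mathbb{R}$. The equation \[ -u''(x) = x^\sigma u(x)^p \quad \text{in } (0,+\infty) \] admits at least one non-trivial, non-negative solution $u \in C^2(0,+\infty)$ if and only if one of the following holds: (1) $\sigma < -2$ and $p > -1-\sigma$; or (2) $\sigma > -2$ and $p < -1-\sigma$.
   Context: Solutions are only required to be $C^2$ on the open half-line $(0,+\infty)$ and to satisfy the equation pointwise there; no continuity at $0$ is assumed. For $p=0$ the term $u^p$ is understood as $1$, and for $p<0$ it is required that $u>0$ on $(0,+\infty)$. *)

theory Defs
  imports "HOL-Analysis.Analysis"
begin

text \<open>Power u^p with the paper's conventions: u^0 = 1; for p \<noteq> 0 the real power
  (only used for u > 0, or u \<ge> 0 when p > 0, where 0 powr p = 0).\<close>
definition upow :: "real \<Rightarrow> real \<Rightarrow> real" where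
  "upow u p = (if p = 0 then 1 else u powr p)"

definition C2_on :: "real set \<Rightarrow> (real \<Rightarrow> real) \<Rightarrow> bool" where
  "C2_on S u \<longleftrightarrow> (\<forall>x\<in>S. u differentiable (at x)) \<and>
                   (\<forall>x\<in>S. deriv u differentiable (at x)) \<and>
                   continuous_on S (deriv (deriv u))"

definition is_solution :: "real \<Rightarrow> real \<Rightarrow> (real \<Rightarrow> real) \<Rightarrow> bool" where
  "is_solution p \<sigma> u \<longleftrightarrow>
     C2_on {0<..} u \<and>
     (\<forall>x>0. u x \<ge> 0) \<and>
     (p < 0 \<longrightarrow> (\<forall>x>0. u x > 0)) \<and>
     (\<exists>x>0. u x \<noteq> 0) \<and>
     (\<forall>x>0. - deriv (deriv u) x = x powr \<sigma> * upow (u x) p)"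

end

theory Submission
  imports Defs "HOL-Real_Asymp.Real_Asymp"
begin

text \<open>
  A non-negative non-trivial solution is concave, hence positive, increasing and strictly
  concave, with \<open>x u'(x) < u(x)\<close>. If \<open>\<sigma> \<ge> -2\<close> and \<open>p \<ge> -1 - \<sigma>\<close>, one finds a bound
  \<open>u(x)\<^sup>p \<ge> a x\<^sup>q\<close> with \<open>\<sigma> + q \<ge> -1\<close>: from \<open>u(x) \<le> C x\<close> when \<open>p \<le> 0\<close>, from
  monotonicity when \<open>\<sigma> \<ge> -1\<close>, and otherwise from the tail estimate
  \<open>-(\<sigma> + 1) u'(x) \<ge> u(x)\<^sup>p x\<^bsup>\<sigma>+1\<^esup>\<close>, obtained by integrating the equation over \<open>[x, \<infinity>)\<close>.
  Then \<open>-u'' \<ge> a/x\<close>, so \<open>u'\<close> decreases like \<open>-a ln x\<close>, contradicting \<open>u' > 0\<close>; the cases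
  with \<open>p \<ge> 1\<close> are excluded by the tail estimate directly. The Kelvin transform \<open>x u(1/x)\<close>
  maps solutions for \<open>(p, \<sigma>)\<close> to solutions for \<open>(p, -3 - \<sigma> - p)\<close> and thereby excludes
  the mirror region \<open>\<sigma> \<le> -2\<close>, \<open>p \<le> -1 - \<sigma>\<close>. Conversely, for admissible exponents
  \<open>c x\<^sup>a\<close> with \<open>a = (\<sigma> + 2) / (1 - p) \<in> (0, 1)\<close> is an explicit solution.
\<close>

lemma upow_eq_powr: "v > 0 \<Longrightarrow> upow v p = v powr p"
  by (simp add: upow_def)

lemma upow_nonneg: "v \<ge> 0 \<Longrightarrow> upow v p \<ge> 0"
  by (simp add: upow_def)

lemma upow_mult: "x > 0 \<Longrightarrow> upow (x * v) p = x powr p * upow v p"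
  by (simp add: upow_def powr_mult)

lemma filterlim_at_top_if_deriv_ge_inverse:
  fixes f f' :: "real \<Rightarrow> real"
  assumes "c > 0" "x\<^sub>0 > 0"
    and f': "\<And>x. x \<ge> x\<^sub>0 \<Longrightarrow> (f has_real_derivative f' x) (at x)"
    and ge: "\<And>x. x \<ge> x\<^sub>0 \<Longrightarrow> c / x \<le> f' x"
  shows "filterlim f at_top at_top"
proof -
  have log_growth: "f x\<^sub>0 + c * (ln x - ln x\<^sub>0) \<le> f x" if "x \<ge> x\<^sub>0" for x
  proof -
    have "f x\<^sub>0 - c * ln x\<^sub>0 \<le> f x - c * ln x"
    proof (rule DERIV_nonneg_imp_nondecreasing[OF that])
      fix t assume "x\<^sub>0 \<le> t" "t \<le> x"
      with assms show "\<exists>y. ((\<lambda>t. f t - c * ln t) has_real_derivative y) (at t) \<and> 0 \<le> y"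
        by (intro exI[of _ "f' t - c * (1 / t)"]) (auto intro!: derivative_eq_intros f')
    qed
    then show ?thesis
      by (simp add: algebra_simps)
  qed
  have "filterlim (\<lambda>x. f x\<^sub>0 + c * (ln x - ln x\<^sub>0)) at_top at_top"
    using \<open>c > 0\<close> by real_asymp
  moreover have "eventually (\<lambda>x. f x\<^sub>0 + c * (ln x - ln x\<^sub>0) \<le> f x) at_top"
    using eventually_ge_at_top[of x\<^sub>0] by eventually_elim (rule log_growth)
  ultimately show ?thesis
    by (rule filterlim_at_top_mono)
qed

locale nonneg_concave =
  fixes u u' u'' :: "real \<Rightarrow> real"
  assumes has_deriv: "\<And>x. x > 0 \<Longrightarrow> (u has_real_derivative u' x) (at x)"
    and has_deriv2: "\<And>x. x > 0 \<Longrightarrow> (u' has_real_derivative u'' x) (at x)"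
    and second_deriv_nonpos: "\<And>x. x > 0 \<Longrightarrow> u'' x \<le> 0"
    and nonneg: "\<And>x. x > 0 \<Longrightarrow> u x \<ge> 0"
    and nontrivial: "\<exists>x>0. u x \<noteq> 0"
begin

lemma deriv_antimono: "0 < x \<Longrightarrow> x \<le> y \<Longrightarrow> u' y \<le> u' x"
  by (rule DERIV_nonpos_imp_nonincreasing)
    (auto intro!: exI[of _ "u'' _"] has_deriv2 second_deriv_nonpos)

lemma below_tangent:
  assumes "x > 0" "y > 0"
  shows "u y \<le> u x + u' x * (y - x)"
proof -
  let ?g = "\<lambda>t. u t - u' x * t"
  have g': "(?g has_real_derivative u' t - u' x) (at t)" if "t > 0" for t
    using that by (auto intro!: derivative_eq_intros has_deriv)
  have "?g y \<le> ?g x"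
  proof (cases "x \<le> y")
    case True
    show ?thesis
    proof (rule DERIV_nonpos_imp_nonincreasing[OF True])
      fix t assume "x \<le> t" "t \<le> y"
      with assms show "\<exists>d. (?g has_real_derivative d) (at t) \<and> d \<le> 0"
        using g'[of t] deriv_antimono[of x t] by (intro exI[of _ "u' t - u' x"]) simp
    qed
  next
    case False
    show ?thesis
    proof (rule DERIV_nonneg_imp_nondecreasing[of y x ?g])
      show "y \<le> x" using False by simp
      fix t assume "y \<le> t" "t \<le> x"
      with assms show "\<exists>d. (?g has_real_derivative d) (at t) \<and> 0 \<le> d"
        using g'[of t] deriv_antimono[of t x] by (intro exI[of _ "u' t - u' x"]) simp
    qed
  qed
  then show ?thesis
    by (simp add: algebra_simps)
qed

lemma deriv_nonneg:
  assumes "x > 0"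
  shows "u' x \<ge> 0"
proof (rule ccontr)
  assume "\<not> u' x \<ge> 0"
  define y where "y = x + (u x + 1) / - u' x"
  have "x \<le> y" "u' x * (y - x) = - (u x + 1)"
    using \<open>\<not> u' x \<ge> 0\<close> nonneg[OF assms] by (simp_all add: y_def divide_nonneg_neg)
  then have "u y \<le> -1"
    using below_tangent[OF assms, of y] assms by simp
  with nonneg[of y] \<open>x \<le> y\<close> assms show False
    by simp
qed

lemma mono: "0 < x \<Longrightarrow> x \<le> y \<Longrightarrow> u x \<le> u y"
  by (rule DERIV_nonneg_imp_nondecreasing) (auto intro!: exI[of _ "u' _"] has_deriv deriv_nonneg)

lemma linear_growth:
  assumes "x \<ge> 1"
  shows "u x \<le> (u 1 + u' 1) * x"
proof -
  have "u 1 \<le> u 1 * x" "u' 1 * (x - 1) \<le> u' 1 * x"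
    using assms nonneg[of 1] deriv_nonneg[of 1] by (auto intro: mult_left_mono simp: mult_le_cancel_left1)
  with below_tangent[of 1 x] assms show ?thesis
    by (simp add: algebra_simps)
qed

lemma mult_deriv_le:
  assumes "x > 0"
  shows "x * u' x \<le> u x"
proof -
  have "((\<lambda>y. u' x * (x - y)) \<longlongrightarrow> u' x * (x - 0)) (at_right 0)"
    by (intro tendsto_intros)
  moreover have "eventually (\<lambda>y. u' x * (x - y) \<le> u x) (at_right 0)"
    unfolding eventually_at_right_field
  proof (intro exI conjI allI impI)
    fix y assume "0 < y" "y < x"
    then show "u' x * (x - y) \<le> u x"
      using below_tangent[OF assms, of y] nonneg[of y] by (simp add: algebra_simps)
  qed (rule assms)
  ultimately have "u' x * (x - 0) \<le> u x"
    by (rule tendsto_upperbound) simp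
  then show ?thesis
    by (simp add: mult.commute)
qed

lemma pos:
  assumes "x > 0"
  shows "u x > 0"
proof (rule ccontr)
  assume "\<not> u x > 0"
  then have "u x = 0"
    using nonneg[OF assms] by simp
  then have "u' x = 0"
    using mult_deriv_le[OF assms] deriv_nonneg[OF assms] assms by (simp add: mult_le_0_iff)
  have "u y = 0" if "y > 0" for y
  proof (cases "y \<le> x")
    case True
    then show ?thesis
      using mono[of y x] nonneg[of y] that \<open>u x = 0\<close> by simp
  next
    case False
    then show ?thesis
      using below_tangent[OF assms that] nonneg[OF that] \<open>u x = 0\<close> \<open>u' x = 0\<close> by simp
  qed
  with nontrivial show False
    by blast
qed

end

locale lane_emden_solution = nonneg_concave u u' u'' for u u' u'' +
  fixes p \<sigma> :: real
  assumes equation: "\<And>x. x > 0 \<Longrightarrow> u'' x = - (x powr \<sigma> * upow (u x) p)"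

lemma lane_emden_solutionI:
  assumes "\<And>x. x > 0 \<Longrightarrow> (u has_real_derivative u' x) (at x)"
    and "\<And>x. x > 0 \<Longrightarrow> (u' has_real_derivative u'' x) (at x)"
    and "\<And>x. x > 0 \<Longrightarrow> u'' x = - (x powr \<sigma> * upow (u x) p)"
    and "\<And>x. x > 0 \<Longrightarrow> u x \<ge> 0"
    and "\<exists>x>0. u x \<noteq> 0"
  shows "lane_emden_solution u u' u'' p \<sigma>"
  using assms upow_nonneg
  unfolding lane_emden_solution_def lane_emden_solution_axioms_def nonneg_concave_def
  by simp

context lane_emden_solution
begin

lemma equation_powr: "x > 0 \<Longrightarrow> u'' x = - (x powr \<sigma> * u x powr p)"
  using equation[of x] pos[of x] by (simp add: upow_eq_powr)

lemma deriv_strict_antimono: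
  assumes "0 < x" "x < y"
  shows "u' y < u' x"
proof -
  obtain z where "x < z" "z < y" "u' y - u' x = (y - x) * u'' z"
    using MVT2[of x y u' u''] assms has_deriv2 by auto
  moreover have "u'' z < 0"
    using equation_powr[of z] pos[of z] \<open>x < z\<close> assms by simp
  ultimately show ?thesis
    using assms mult_pos_neg[of "y - x" "u'' z"] by simp
qed

lemma deriv_pos: "x > 0 \<Longrightarrow> u' x > 0"
  using deriv_strict_antimono[of x "x + 1"] deriv_nonneg[of "x + 1"] by simp

lemma mult_deriv_less:
  assumes "x > 0"
  shows "x * u' x < u x"
proof -
  have "u (x / 2) \<le> u x - u' x * (x / 2)"
    using below_tangent[of x "x / 2"] assms by (simp add: algebra_simps)
  moreover have "x / 2 * u' (x / 2) \<le> u (x / 2)"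
    using mult_deriv_le[of "x / 2"] assms by simp
  moreover have "x / 2 * u' x < x / 2 * u' (x / 2)"
    using deriv_strict_antimono[of "x / 2" x] assms by simp
  ultimately show ?thesis
    by (simp add: algebra_simps)
qed

text \<open>Otherwise \<open>-u'' \<ge> a/x\<close> eventually, and \<open>u'\<close> would tend to \<open>-\<infinity>\<close>.\<close>

lemma power_lower_bound_exponent:
  assumes "a > 0" and bound: "\<And>x. x \<ge> 1 \<Longrightarrow> a * x powr q \<le> u x powr p"
  shows "\<sigma> + q < -1"
proof (rule ccontr)
  assume "\<not> \<sigma> + q < -1"
  have "a / x \<le> - u'' x" if "x \<ge> 1" for x
  proof -
    have "a / x = a * x powr (-1)"
      using that by (simp add: powr_minus divide_inverse)
    also have "\<dots> \<le> a * x powr (\<sigma> + q)"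
      using that \<open>a > 0\<close> \<open>\<not> \<sigma> + q < -1\<close> by (intro mult_left_mono powr_mono) auto
    also have "\<dots> = x powr \<sigma> * (a * x powr q)"
      using that by (simp add: powr_add)
    also have "\<dots> \<le> x powr \<sigma> * u x powr p"
      using bound[OF that] by (intro mult_left_mono) auto
    also have "\<dots> = - u'' x"
      using equation_powr that by simp
    finally show ?thesis .
  qed
  then have "filterlim (\<lambda>x. - u' x) at_top at_top"
    using \<open>a > 0\<close> has_deriv2
    by (intro filterlim_at_top_if_deriv_ge_inverse[of a 1 _ "\<lambda>x. - u'' x"])
      (auto intro!: derivative_intros)
  then have "eventually (\<lambda>x. u' x \<le> 0) at_top"
    unfolding filterlim_at_top by (auto dest: spec[of _ 0])
  moreover have "eventually (\<lambda>x. 0 < u' x) at_top"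
    using eventually_gt_at_top[of 0] by eventually_elim (rule deriv_pos)
  ultimately have "eventually (\<lambda>x. u' x \<le> 0 \<and> 0 < u' x) at_top"
    by (rule eventually_conj)
  then show False
    by (auto simp: eventually_at_top_linorder)
qed

text \<open>Integrate \<open>-u''(t) = t\<^sup>\<sigma> u(t)\<^sup>p \<ge> t\<^sup>\<sigma> u(x)\<^sup>p\<close> over \<open>[x, \<infinity>)\<close>, using \<open>u' > 0\<close>.\<close>

lemma tail_deriv_bound:
  assumes "p > 0" "\<sigma> < -1" "x > 0"
  shows "u x powr p * x powr (\<sigma> + 1) \<le> - (\<sigma> + 1) * u' x"
proof -
  define c where "c = u x powr p / - (\<sigma> + 1)"
  define G where "G = (\<lambda>t. c * t powr (\<sigma> + 1))"
  have G': "(G has_real_derivative - (u x powr p * t powr \<sigma>)) (at t)" if "t > 0" for t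
  proof -
    have "((\<lambda>t. t powr (\<sigma> + 1)) has_real_derivative (\<sigma> + 1) * t powr \<sigma>) (at t)"
      using has_real_derivative_powr[OF that, of "\<sigma> + 1"] by simp
    then have "(G has_real_derivative c * ((\<sigma> + 1) * t powr \<sigma>)) (at t)"
      unfolding G_def by (rule DERIV_cmult)
    also have "c * ((\<sigma> + 1) * t powr \<sigma>) = - (u x powr p * t powr \<sigma>)"
      using assms by (simp add: c_def field_simps)
    finally show ?thesis .
  qed
  have incr: "G x - u' x \<le> G t - u' t" if "t \<ge> x" for t
  proof (rule DERIV_nonneg_imp_nondecreasing[OF that])
    fix s assume "x \<le> s" "s \<le> t"
    with assms have "s > 0" by simp
    have "u x powr p \<le> u s powr p"
      using mono[of x s] nonneg[of x] \<open>x \<le> s\<close> assms by (intro powr_mono2) auto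
    then have "0 \<le> - (u x powr p * s powr \<sigma>) - u'' s"
      using equation_powr[OF \<open>s > 0\<close>] by (simp add: algebra_simps mult_left_mono)
    then show "\<exists>d. ((\<lambda>t. G t - u' t) has_real_derivative d) (at s) \<and> 0 \<le> d"
      using \<open>s > 0\<close>
      by (intro exI[of _ "- (u x powr p * s powr \<sigma>) - u'' s"] conjI DERIV_diff G' has_deriv2)
  qed
  have gap: "G x - u' x \<le> G t" if "t \<ge> x" for t
    using incr[OF that] deriv_pos[of t] that assms by simp
  have "eventually (\<lambda>t. G x - u' x \<le> G t) at_top"
    using eventually_ge_at_top[of x] by eventually_elim (rule gap)
  moreover have "(G \<longlongrightarrow> 0) at_top"
    unfolding G_def using \<open>\<sigma> < -1\<close> by real_asymp
  ultimately have "G x - u' x \<le> 0"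
    by (intro tendsto_lowerbound) auto
  then show ?thesis
    using assms by (simp add: G_def c_def field_simps)
qed

lemma power_growth_bound:
  assumes "p > 0" "\<sigma> < -1" "x > 0"
  shows "u x powr p * x powr (\<sigma> + 2) < - (\<sigma> + 1) * u x"
proof -
  have "x powr (\<sigma> + 2) = x * x powr (\<sigma> + 1)"
    using powr_add[of x "\<sigma> + 1" 1] assms by (simp add: add_ac mult_ac)
  then have "u x powr p * x powr (\<sigma> + 2) = x * (u x powr p * x powr (\<sigma> + 1))"
    by simp
  also have "\<dots> \<le> - (\<sigma> + 1) * (x * u' x)"
    using tail_deriv_bound[OF assms] assms by (simp add: mult_left_mono)
  also have "\<dots> < - (\<sigma> + 1) * u x"
    using mult_deriv_less[OF \<open>x > 0\<close>] assms by simp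
  finally show ?thesis .
qed

lemma sigma_bound_nonneg_exponent:
  assumes "p \<ge> 0"
  shows "\<sigma> < -1"
proof -
  have "\<sigma> + 0 < -1"
  proof (rule power_lower_bound_exponent[of "u 1 powr p"])
    show "u 1 powr p > 0"
      using pos[of 1] by simp
    fix x :: real assume "x \<ge> 1"
    then show "u 1 powr p * x powr 0 \<le> u x powr p"
      using mono[of 1 x] pos[of 1] assms by (simp add: powr_mono2)
  qed
  then show ?thesis
    by simp
qed

lemma exponent_sum_bound_nonpos:
  assumes "p \<le> 0"
  shows "\<sigma> + p < -1"
proof (rule power_lower_bound_exponent[of "(u 1 + u' 1) powr p"])
  show "(u 1 + u' 1) powr p > 0"
    using pos[of 1] deriv_pos[of 1] by simp
  fix x :: real assume "x \<ge> 1"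
  then have "((u 1 + u' 1) * x) powr p \<le> u x powr p"
    using linear_growth pos[of x] assms by (intro powr_mono2') auto
  then show "(u 1 + u' 1) powr p * x powr p \<le> u x powr p"
    by (simp add: powr_mult)
qed

lemma exponent_sum_bound_sublinear:
  assumes "0 < p" "p < 1"
  shows "\<sigma> + p < -1"
proof (rule ccontr)
  assume "\<not> \<sigma> + p < -1"
  have "\<sigma> < -1"
    using sigma_bound_nonneg_exponent assms by simp
  define k where "k = - (\<sigma> + 1)"
  have "k > 0"
    using \<open>\<sigma> < -1\<close> by (simp add: k_def)
  define a where "a = k powr (- 1 / (1 - p))"
  have "a > 0"
    using \<open>k > 0\<close> by (simp add: a_def)
  have linear_lower: "a * x \<le> u x" if "x \<ge> 1" for x
  proof -
    have "u x > 0"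
      using pos that by simp
    have "- 1 / (1 - p) * (1 - p) = -1"
      using assms by simp
    then have "a powr (1 - p) = k powr -1"
      unfolding a_def powr_powr by simp
    then have "(a * x) powr (1 - p) = x powr (1 - p) / k"
      using \<open>k > 0\<close> by (simp add: powr_mult powr_minus divide_inverse)
    also have "\<dots> \<le> x powr (\<sigma> + 2) / k"
      using that \<open>\<not> \<sigma> + p < -1\<close> \<open>k > 0\<close> by (intro divide_right_mono powr_mono) auto
    also have "\<dots> < u x powr (1 - p)"
    proof -
      have "u x powr p * x powr (\<sigma> + 2) < k * (u x powr p * u x powr (1 - p))"
        using power_growth_bound[of x] \<open>\<sigma> < -1\<close> assms that \<open>u x > 0\<close>
        by (simp add: k_def powr_add[symmetric])
      then show ?thesis
        using \<open>u x > 0\<close> \<open>k > 0\<close> by (simp add: field_simps)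
    qed
    finally have "(a * x) powr (1 - p) < u x powr (1 - p)" .
    then show ?thesis
      using powr_less_cancel2[of "1 - p" "a * x" "u x"] \<open>a > 0\<close> \<open>u x > 0\<close> that assms by simp
  qed
  have "\<sigma> + p < -1"
  proof (rule power_lower_bound_exponent[of "a powr p"])
    show "a powr p > 0"
      using \<open>a > 0\<close> by simp
    fix x :: real assume "x \<ge> 1"
    then have "(a * x) powr p \<le> u x powr p"
      using linear_lower \<open>a > 0\<close> assms by (intro powr_mono2) auto
    then show "a powr p * x powr p \<le> u x powr p"
      by (simp add: powr_mult)
  qed
  with \<open>\<not> \<sigma> + p < -1\<close> show False
    by simp
qed

lemma sigma_bound_superlinear:
  assumes "p \<ge> 1"
  shows "\<sigma> \<le> -2"
proof (rule ccontr)
  assume "\<not> \<sigma> \<le> -2"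
  have "\<sigma> < -1"
    using sigma_bound_nonneg_exponent assms by simp
  have "filterlim (\<lambda>x. u 1 powr (p - 1) * x powr (\<sigma> + 2)) at_top at_top"
    using pos[of 1] \<open>\<not> \<sigma> \<le> -2\<close> by real_asymp
  then have "eventually (\<lambda>x. - (\<sigma> + 1) < u 1 powr (p - 1) * x powr (\<sigma> + 2)) at_top"
    unfolding filterlim_at_top_dense by blast
  then have "eventually (\<lambda>x. 1 \<le> x \<and> - (\<sigma> + 1) < u 1 powr (p - 1) * x powr (\<sigma> + 2)) at_top"
    by (intro eventually_conj) simp_all
  then obtain x where "1 \<le> x" and large: "- (\<sigma> + 1) < u 1 powr (p - 1) * x powr (\<sigma> + 2)"
    using eventually_happens'[OF trivial_limit_at_top_linorder] by blast
  have "u x > 0"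
    using pos \<open>1 \<le> x\<close> by simp
  have "u 1 powr (p - 1) * x powr (\<sigma> + 2) \<le> u x powr (p - 1) * x powr (\<sigma> + 2)"
    using mono[of 1 x] pos[of 1] \<open>1 \<le> x\<close> assms by (intro mult_right_mono powr_mono2) auto
  also have "\<dots> < - (\<sigma> + 1)"
  proof -
    have "u x * (u x powr (p - 1) * x powr (\<sigma> + 2)) < u x * - (\<sigma> + 1)"
      using power_growth_bound[of x] \<open>\<sigma> < -1\<close> \<open>1 \<le> x\<close> \<open>u x > 0\<close> assms
      by (simp add: powr_diff mult_ac)
    then show ?thesis
      using \<open>u x > 0\<close> by simp
  qed
  finally show False
    using large by simp
qed

lemma sigma_ne_minus_two_superlinear:
  assumes "p \<ge> 1"
  shows "\<sigma> \<noteq> -2"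
proof
  assume "\<sigma> = -2"
  have "filterlim u at_top at_top"
  proof (rule filterlim_at_top_if_deriv_ge_inverse[of "u 1 powr p" 1 u u'])
    fix x :: real assume "x \<ge> 1"
    then show "(u has_real_derivative u' x) (at x)"
      using has_deriv by simp
    have "u 1 powr p \<le> u x powr p"
      using mono[of 1 x] pos[of 1] \<open>x \<ge> 1\<close> assms by (intro powr_mono2) auto
    also have "\<dots> = u x powr p * x powr (\<sigma> + 1) * x"
      using \<open>\<sigma> = -2\<close> \<open>x \<ge> 1\<close> by (simp add: powr_minus)
    also have "\<dots> \<le> u' x * x"
      using tail_deriv_bound[of x] \<open>\<sigma> = -2\<close> \<open>x \<ge> 1\<close> assms by (intro mult_right_mono) auto
    finally show "u 1 powr p / x \<le> u' x"
      using \<open>x \<ge> 1\<close> by (simp add: divide_le_eq)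
  qed (use pos[of 1] in auto)
  then have "eventually (\<lambda>x. 1 \<le> x \<and> 1 \<le> u x) at_top"
    unfolding filterlim_at_top by (intro eventually_conj) auto
  then obtain x where "1 \<le> x" "1 \<le> u x"
    using eventually_happens'[OF trivial_limit_at_top_linorder] by blast
  have "u x \<le> u x powr p"
    using powr_mono[of 1 p "u x"] assms \<open>1 \<le> u x\<close> by simp
  moreover have "u x powr p < u x"
    using power_growth_bound[of x] \<open>\<sigma> = -2\<close> \<open>1 \<le> x\<close> assms by simp
  ultimately show False
    by simp
qed

lemma exponents_subcritical: "\<sigma> < -2 \<or> \<sigma> + p < -1"
proof -
  consider "p \<le> 0" | "0 < p" "p < 1" | "p \<ge> 1"
    by linarith
  then show ?thesis
    using exponent_sum_bound_nonpos exponent_sum_bound_sublinear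
      sigma_bound_superlinear sigma_ne_minus_two_superlinear
    by cases force+
qed

lemma kelvin_transform:
  "lane_emden_solution (\<lambda>x. x * u (1 / x)) (\<lambda>x. u (1 / x) - u' (1 / x) / x)
     (\<lambda>x. u'' (1 / x) / x ^ 3) p (-3 - \<sigma> - p)"
proof (rule lane_emden_solutionI)
  fix x :: real assume "x > 0"
  have inverse: "((\<lambda>x. 1 / x) has_real_derivative - (1 / x\<^sup>2)) (at x)"
    using \<open>x > 0\<close> by (auto intro!: derivative_eq_intros simp: power2_eq_square)
  have u_inverse: "((\<lambda>x. u (1 / x)) has_real_derivative u' (1 / x) * - (1 / x\<^sup>2)) (at x)"
    using DERIV_chain2[OF has_deriv inverse] \<open>x > 0\<close> by simp
  have u'_inverse: "((\<lambda>x. u' (1 / x)) has_real_derivative u'' (1 / x) * - (1 / x\<^sup>2)) (at x)"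
    using DERIV_chain2[OF has_deriv2 inverse] \<open>x > 0\<close> by simp
  show "((\<lambda>x. x * u (1 / x)) has_real_derivative u (1 / x) - u' (1 / x) / x) (at x)"
    using DERIV_mult[OF DERIV_ident u_inverse] \<open>x > 0\<close> by (simp add: power2_eq_square field_simps)
  have "((\<lambda>x. u (1 / x) - u' (1 / x) / x) has_real_derivative
      u' (1 / x) * - (1 / x\<^sup>2) - (u'' (1 / x) * - (1 / x\<^sup>2) * x - u' (1 / x) * 1) / (x * x)) (at x)"
    using \<open>x > 0\<close> by (intro DERIV_diff u_inverse DERIV_divide u'_inverse DERIV_ident) auto
  then show "((\<lambda>x. u (1 / x) - u' (1 / x) / x) has_real_derivative u'' (1 / x) / x ^ 3) (at x)"
    using \<open>x > 0\<close> by (simp add: power2_eq_square power3_eq_cube field_simps)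
  have "(1 / x) powr \<sigma> = x powr (- \<sigma>)"
    using \<open>x > 0\<close> by (simp add: powr_divide powr_minus divide_inverse inverse_powr)
  moreover have "x ^ 3 = x powr 3"
    using \<open>x > 0\<close> by (simp add: powr_realpow)
  ultimately have power_inverse: "(1 / x) powr \<sigma> / x ^ 3 = x powr (- \<sigma> - 3)"
    by (simp add: powr_diff)
  have "-3 - \<sigma> - p + p = - \<sigma> - 3"
    by simp
  then have power_product: "x powr (-3 - \<sigma> - p) * x powr p = x powr (- \<sigma> - 3)"
    by (simp only: powr_add[symmetric])
  have "u'' (1 / x) / x ^ 3 = - ((1 / x) powr \<sigma> / x ^ 3 * upow (u (1 / x)) p)"
    using equation[of "1 / x"] \<open>x > 0\<close> by simp
  also have "\<dots> = - (x powr (-3 - \<sigma> - p) * x powr p * upow (u (1 / x)) p)"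
    by (simp only: power_inverse power_product)
  also have "\<dots> = - (x powr (-3 - \<sigma> - p) * upow (x * u (1 / x)) p)"
    using \<open>x > 0\<close> by (simp add: upow_mult)
  finally show "u'' (1 / x) / x ^ 3 = - (x powr (-3 - \<sigma> - p) * upow (x * u (1 / x)) p)" .
  show "x * u (1 / x) \<ge> 0"
    using nonneg[of "1 / x"] \<open>x > 0\<close> by simp
next
  show "\<exists>x>0. x * u (1 / x) \<noteq> 0"
    using pos[of 1] by (intro exI[of _ 1]) simp
qed

end

lemma is_solution_imp_lane_emden_solution:
  assumes "is_solution p \<sigma> u"
  shows "lane_emden_solution u (deriv u) (deriv (deriv u)) p \<sigma>"
  using assms unfolding is_solution_def C2_on_def
  by (intro lane_emden_solutionI) (auto simp: DERIV_deriv_iff_real_differentiable)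

lemma is_solutionI:
  assumes u': "\<And>x. x > 0 \<Longrightarrow> (u has_real_derivative u' x) (at x)"
    and u'': "\<And>x. x > 0 \<Longrightarrow> (u' has_real_derivative u'' x) (at x)"
    and "continuous_on {0<..} u''"
    and "\<And>x. x > 0 \<Longrightarrow> u x > 0"
    and "\<And>x. x > 0 \<Longrightarrow> - u'' x = x powr \<sigma> * upow (u x) p"
  shows "is_solution p \<sigma> u"
proof -
  have deriv: "deriv u x = u' x" if "x > 0" for x
    using u'[OF that] by (rule DERIV_imp_deriv)
  have deriv_has_deriv: "(deriv u has_real_derivative u'' x) (at x)" if "x > 0" for x
    by (rule has_field_derivative_transform_within_open[OF u''[OF that], of "{0<..}"])
      (use that deriv in auto)
  have deriv2: "deriv (deriv u) x = u'' x" if "x > 0" for x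
    using deriv_has_deriv[OF that] by (rule DERIV_imp_deriv)
  then have "continuous_on {0<..} (deriv (deriv u))"
    using continuous_on_cong[of "{0<..}" "{0<..}" "deriv (deriv u)" u''] assms(3) by simp
  moreover have "u differentiable (at x)" "deriv u differentiable (at x)" if "x > 0" for x
    using u'[OF that] deriv_has_deriv[OF that] real_differentiable_def by blast+
  moreover have "\<exists>x>0. u x \<noteq> 0"
    using assms(4)[of 1] by (intro exI[of _ 1]) auto
  ultimately show ?thesis
    using assms(4,5) deriv2
    unfolding is_solution_def C2_on_def by (auto intro: less_imp_le)
qed

lemma is_solution_power:
  assumes "0 < a" "a < 1" "p \<noteq> 1" "a * (1 - p) = \<sigma> + 2"
  shows "is_solution p \<sigma> (\<lambda>x. (a * (1 - a)) powr (1 / (p - 1)) * x powr a)"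
proof -
  define c where "c = (a * (1 - a)) powr (1 / (p - 1))"
  have "c > 0"
    using assms by (simp add: c_def)
  have "c powr p = c * (a * (1 - a))"
  proof -
    have "c powr (p - 1) = a * (1 - a)"
      using assms by (simp add: c_def powr_powr)
    then show ?thesis
      using powr_add[of c "p - 1" 1] \<open>c > 0\<close> by simp
  qed
  moreover have "\<sigma> + a * p = a - 1 - 1"
    using assms(4) by (simp add: algebra_simps)
  ultimately have rhs: "x powr \<sigma> * (c * x powr a) powr p = c * (a * (1 - a)) * x powr (a - 1 - 1)"
    if "x > 0" for x
  proof -
    have "x powr \<sigma> * (c * x powr a) powr p = c powr p * (x powr \<sigma> * x powr (a * p))"
      using that \<open>c > 0\<close> by (simp add: powr_mult powr_powr mult_ac)
    also have "\<dots> = c * (a * (1 - a)) * x powr (a - 1 - 1)"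
      using \<open>c powr p = c * (a * (1 - a))\<close> \<open>\<sigma> + a * p = a - 1 - 1\<close>
      by (simp add: powr_add[symmetric])
    finally show ?thesis .
  qed
  show ?thesis
    unfolding c_def[symmetric]
  proof (rule is_solutionI)
    fix x :: real assume "x > 0"
    show "((\<lambda>x. c * x powr a) has_real_derivative c * (a * x powr (a - 1))) (at x)"
      using \<open>x > 0\<close> by (intro DERIV_cmult has_real_derivative_powr)
    show "((\<lambda>x. c * (a * x powr (a - 1))) has_real_derivative
        c * (a * ((a - 1) * x powr (a - 1 - 1)))) (at x)"
      using \<open>x > 0\<close> by (intro DERIV_cmult has_real_derivative_powr)
    show "c * x powr a > 0"
      using \<open>c > 0\<close> \<open>x > 0\<close> by simp
    show "- (c * (a * ((a - 1) * x powr (a - 1 - 1)))) = x powr \<sigma> * upow (c * x powr a) p"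
      using rhs[OF \<open>x > 0\<close>] \<open>c > 0\<close> \<open>x > 0\<close> by (simp add: upow_eq_powr algebra_simps)
  next
    show "continuous_on {0<..} (\<lambda>x. c * (a * ((a - 1) * x powr (a - 1 - 1))))"
      by (intro continuous_intros) auto
  qed
qed

theorem theorem1p3:
  fixes p \<sigma> :: real
  shows "(\<exists>u. is_solution p \<sigma> u) \<longleftrightarrow>
           ((\<sigma> < -2 \<and> p > -1 - \<sigma>) \<or> (\<sigma> > -2 \<and> p < -1 - \<sigma>))"
proof
  assume "\<exists>u. is_solution p \<sigma> u"
  then obtain u where "is_solution p \<sigma> u" ..
  then interpret lane_emden_solution u "deriv u" "deriv (deriv u)" p \<sigma>
    by (rule is_solution_imp_lane_emden_solution)
  have "\<sigma> < -2 \<or> \<sigma> + p < -1"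
    by (rule exponents_subcritical)
  moreover have "-3 - \<sigma> - p < -2 \<or> (-3 - \<sigma> - p) + p < -1"
    by (rule lane_emden_solution.exponents_subcritical[OF kelvin_transform])
  ultimately show "(\<sigma> < -2 \<and> p > -1 - \<sigma>) \<or> (\<sigma> > -2 \<and> p < -1 - \<sigma>)"
    by argo
next
  assume "(\<sigma> < -2 \<and> p > -1 - \<sigma>) \<or> (\<sigma> > -2 \<and> p < -1 - \<sigma>)"
  moreover define a where "a = (\<sigma> + 2) / (1 - p)"
  ultimately have "0 < a" "a < 1" "p \<noteq> 1" "a * (1 - p) = \<sigma> + 2"
    by (auto simp: zero_less_divide_iff divide_less_eq)
  then show "\<exists>u. is_solution p \<sigma> u"
    by (blast intro: is_solution_power)
qed

end
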